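(* Let $k$ be a positive integer. In the perfect matching polytope of $K_{2k}$, the vertex set of any facet with the maximum number of vertices is the set of (characteristic vectors of) perfect matchings that do not contain some given edge $e$ of $K_{2k}$.
   Context: A perfect matching of $K_{2k}$ is a set of $k$ pairwise vertex-disjoint edges. The perfect matching polytope of $K_{2k}$ is the convex hull in $\mathbb{R}^{\binom{2k}{2}}$ (coordinates indexed by edges) of the characteristic vectors of all perfect matchings of $K_{2k}$; its vertices are exactly these characteristic vectors. A facet is a maximal proper face, and the size of a facet is its number of vertices. *)

theory Defs
  imports "HOL-Analysis.Analysis"
begin

text \<open>Vertices of the complete graph are the elements of a finite type 'v
  (so K_{2k} with 2k = CARD('v)).
  Coordinates are indexed by the type 'v set; only the coordinates at edges
  can be nonzero on the polytope.\<close>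

definition edges_K :: "'v set set" where
  "edges_K = {e. card e = 2}"

definition perfect_matching :: "'v::finite set set \<Rightarrow> bool" where
  "perfect_matching M \<longleftrightarrow> M \<subseteq> edges_K \<and> card M = CARD('v) div 2 \<and>
     (\<forall>e\<in>M. \<forall>f\<in>M. e \<noteq> f \<longrightarrow> e \<inter> f = {})"

definition char_vec :: "'v::finite set set \<Rightarrow> real ^ ('v set)" where
  "char_vec M = (\<chi> e. if e \<in> M then 1 else 0)"

definition pm_vertices :: "(real ^ ('v::finite set)) set" where
  "pm_vertices = char_vec ` {M. perfect_matching M}"

definition pm_polytope :: "(real ^ ('v::finite set)) set" where
  "pm_polytope = convex hull pm_vertices"

definition is_facet :: "'a::real_vector set \<Rightarrow> 'a set \<Rightarrow> bool" where
  "is_facet F P \<longleftrightarrow> F face_of P \<and> F \<noteq> P \<and>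
     (\<forall>G. G face_of P \<and> G \<noteq> P \<and> F \<subseteq> G \<longrightarrow> G = F)"

definition face_vertices :: "(real ^ ('v::finite set)) set \<Rightarrow> (real ^ ('v set)) set" where
  "face_vertices F = F \<inter> pm_vertices"

end

theory Submission
  imports Defs
begin

text \<open>
  A facet \<open>F\<close> of the perfect matching polytope is exposed by a weight function \<open>w\<close>: its
  vertices are the maximum-weight perfect matchings, and the set \<open>Z\<close> of lighter ones is
  nonempty because \<open>F\<close> is proper. The face \<open>x\<^sub>e = 0\<close> lies in a facet missing at most the
  \<open>(2k - 3)!!\<close> matchings through \<open>e\<close>, so a largest facet has \<open>|Z| \<le> (2k - 3)!!\<close>.

  The combinatorial core is that every nonempty \<open>Z\<close> has at least \<open>(2k - 3)!!\<close> elements,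
  with equality only if \<open>Z\<close> consists of the matchings through one edge. If some edge lies in
  no maximum matching, all matchings through it are in \<open>Z\<close>. Otherwise \<open>|Z| > (2k - 3)!!\<close>,
  by induction on \<open>k\<close>: fix a vertex \<open>v\<close>. If at most one edge \<open>vu\<close> lies in maximum-weight
  matchings only, the induction hypothesis for \<open>K\<^sub>2\<^sub>k - v - u\<close>, summed over the other \<open>u\<close>, suffices.
  If two such edges \<open>va, vb\<close> exist, exchanging two edges of a matching for two others
  pins the weights down so rigidly that every matching avoiding \<open>va, vb, ab\<close> lies in \<open>Z\<close>.
\<close>

section \<open>Perfect matchings of a finite set\<close>

definition perfect_matching_on :: "'a set \<Rightarrow> 'a set set \<Rightarrow> bool" where
  "perfect_matching_on S M \<longleftrightarrow>
     (\<forall>e\<in>M. card e = 2 \<and> e \<subseteq> S) \<and> (\<forall>e\<in>M. \<forall>f\<in>M. e \<noteq> f \<longrightarrow> e \<inter> f = {}) \<and> \<Union>M = S"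

definition pms :: "'a set \<Rightarrow> 'a set set set" where
  "pms S = {M. perfect_matching_on S M}"

definition pms_with :: "'a set \<Rightarrow> 'a set \<Rightarrow> 'a set set set" where
  "pms_with S e = {M \<in> pms S. e \<in> M}"

fun pm_count :: "nat \<Rightarrow> nat" where
  "pm_count 0 = 1"
| "pm_count (Suc n) = (2 * n + 1) * pm_count n"

lemma pm_count_pos: "0 < pm_count n"
  by (induction n) auto

lemma perfect_matching_on_edge:
  "perfect_matching_on S M \<Longrightarrow> e \<in> M \<Longrightarrow> card e = 2 \<and> e \<subseteq> S"
  unfolding perfect_matching_on_def by auto

lemma perfect_matching_on_disjoint:
  "perfect_matching_on S M \<Longrightarrow> e \<in> M \<Longrightarrow> f \<in> M \<Longrightarrow> e \<noteq> f \<Longrightarrow> e \<inter> f = {}"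
  unfolding perfect_matching_on_def by auto

lemma perfect_matching_on_partner_unique:
  assumes "perfect_matching_on S M" "{v, u} \<in> M" "{v, u'} \<in> M"
  shows "u = u'"
  using perfect_matching_on_disjoint[OF assms] by (auto simp: doubleton_eq_iff)

lemma perfect_matching_on_partner:
  assumes "perfect_matching_on S M" "v \<in> S"
  obtains u where "{v, u} \<in> M" "u \<noteq> v" "u \<in> S"
proof -
  obtain e where e: "e \<in> M" "v \<in> e"
    using assms unfolding perfect_matching_on_def by auto
  then have "card e = 2" "e \<subseteq> S"
    using perfect_matching_on_edge[OF assms(1)] by auto
  then obtain u where "e = {v, u}" "u \<noteq> v"
    using e(2) by (auto simp: card_2_iff doubleton_eq_iff)
  then show thesis
    using that e(1) \<open>e \<subseteq> S\<close> by auto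
qed

lemma finite_pms: "finite S \<Longrightarrow> finite (pms S)"
  by (rule finite_subset[of _ "Pow (Pow S)"]) (auto simp: pms_def perfect_matching_on_def)

lemma perfect_matching_on_finite: "finite S \<Longrightarrow> perfect_matching_on S M \<Longrightarrow> finite M"
  by (rule finite_subset[of _ "Pow S"]) (auto simp: perfect_matching_on_def)

lemma pms_empty: "pms {} = {{}}"
  by (auto simp: pms_def perfect_matching_on_def)

lemma perfect_matching_on_insert:
  assumes "perfect_matching_on (S - e) N" "e \<subseteq> S" "card e = 2"
  shows "perfect_matching_on S (insert e N)" "e \<notin> N"
proof -
  have N: "\<forall>f\<in>N. card f = 2 \<and> f \<subseteq> S - e" "\<forall>f\<in>N. \<forall>g\<in>N. f \<noteq> g \<longrightarrow> f \<inter> g = {}"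
    "\<Union>N = S - e"
    using assms(1) unfolding perfect_matching_on_def by auto
  have "e \<noteq> {}" using assms(3) by auto
  then show "e \<notin> N" using N(1) by auto
  show "perfect_matching_on S (insert e N)" unfolding perfect_matching_on_def
  proof (intro conjI)
    show "\<forall>f\<in>insert e N. card f = 2 \<and> f \<subseteq> S" using N(1) assms by auto
    show "\<forall>f\<in>insert e N. \<forall>g\<in>insert e N. f \<noteq> g \<longrightarrow> f \<inter> g = {}"
      using N(1,2) by fast
    show "\<Union>(insert e N) = S" using N(3) assms(2) by auto
  qed
qed

lemma perfect_matching_on_Diff:
  assumes "perfect_matching_on S M" "e \<in> M"
  shows "perfect_matching_on (S - e) (M - {e})"
proof -
  have M: "\<forall>f\<in>M. card f = 2 \<and> f \<subseteq> S" "\<forall>f\<in>M. \<forall>g\<in>M. f \<noteq> g \<longrightarrow> f \<inter> g = {}" "\<Union>M = S"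
    using assms(1) unfolding perfect_matching_on_def by auto
  have disj: "\<forall>f\<in>M - {e}. f \<inter> e = {}" using M(2) assms(2) by blast
  show ?thesis unfolding perfect_matching_on_def
  proof (intro conjI)
    show "\<forall>f\<in>M - {e}. card f = 2 \<and> f \<subseteq> S - e" using M(1) disj by blast
    show "\<forall>f\<in>M - {e}. \<forall>g\<in>M - {e}. f \<noteq> g \<longrightarrow> f \<inter> g = {}" using M(2) by blast
    show "\<Union>(M - {e}) = S - e" using M(1,3) disj by blast
  qed
qed

lemma perfect_matching_on_Un:
  assumes "perfect_matching_on A M" "perfect_matching_on B N" "A \<inter> B = {}"
  shows "perfect_matching_on (A \<union> B) (M \<union> N)"
proof -
  have M: "\<forall>e\<in>M. card e = 2 \<and> e \<subseteq> A" "\<forall>e\<in>M. \<forall>f\<in>M. e \<noteq> f \<longrightarrow> e \<inter> f = {}" "\<Union>M = A"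
    and N: "\<forall>e\<in>N. card e = 2 \<and> e \<subseteq> B" "\<forall>e\<in>N. \<forall>f\<in>N. e \<noteq> f \<longrightarrow> e \<inter> f = {}" "\<Union>N = B"
    using assms(1,2) unfolding perfect_matching_on_def by auto
  have MN: "e \<inter> f = {}" "f \<inter> e = {}" if "e \<in> M" "f \<in> N" for e f
    using that M(1) N(1) assms(3) by blast+
  show ?thesis unfolding perfect_matching_on_def
  proof (intro conjI)
    show "\<forall>e\<in>M \<union> N. card e = 2 \<and> e \<subseteq> A \<union> B" using M(1) N(1) by blast
    show "\<forall>e\<in>M \<union> N. \<forall>f\<in>M \<union> N. e \<noteq> f \<longrightarrow> e \<inter> f = {}"
      using M(2) N(2) MN by blast
    show "\<Union>(M \<union> N) = A \<union> B" using M(3) N(3) by blast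
  qed
qed

lemma pms_pair:
  assumes "v \<noteq> u"
  shows "pms {v, u} = {{{v, u}}}"
proof -
  have "M = {{v, u}}" if M: "perfect_matching_on {v, u} M" for M
  proof -
    obtain u' where u': "{v, u'} \<in> M" "u' \<noteq> v" "u' \<in> {v, u}"
      by (rule perfect_matching_on_partner[OF M insertI1])
    then have e: "{v, u} \<in> M" by (metis insertE singletonD)
    have "M - {{v, u}} \<in> pms {}"
      using perfect_matching_on_Diff[OF M e] by (simp add: pms_def)
    then have "M - {{v, u}} = {}" by (simp add: pms_empty)
    then show ?thesis using e by blast
  qed
  moreover have "perfect_matching_on {v, u} {{v, u}}"
    using assms by (simp add: perfect_matching_on_def)
  ultimately show ?thesis unfolding pms_def by blast
qed

lemma card_pms_with:
  assumes "e \<subseteq> S" "card e = 2"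
  shows "card (pms_with S e) = card (pms (S - e))"
proof -
  have "bij_betw (\<lambda>M. M - {e}) (pms_with S e) (pms (S - e))"
  proof (rule bij_betw_byWitness[where f' = "insert e"])
    show "\<forall>M\<in>pms_with S e. insert e (M - {e}) = M"
      by (auto simp: pms_with_def)
    show "\<forall>N\<in>pms (S - e). insert e N - {e} = N"
      using perfect_matching_on_insert(2)[OF _ assms] by (auto simp: pms_def)
    show "(\<lambda>M. M - {e}) ` pms_with S e \<subseteq> pms (S - e)"
      using perfect_matching_on_Diff by (auto simp: pms_with_def pms_def)
    show "insert e ` pms (S - e) \<subseteq> pms_with S e"
      using perfect_matching_on_insert(1)[OF _ assms] by (auto simp: pms_with_def pms_def)
  qed
  then show ?thesis by (rule bij_betw_same_card)
qed

lemma card_pms: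
  assumes "finite S" "card S = 2 * n"
  shows "card (pms S) = pm_count n"
  using assms
proof (induction n arbitrary: S)
  case 0
  then show ?case by (simp add: pms_empty)
next
  case (Suc n)
  then obtain v where v: "v \<in> S" by fastforce
  have pms_split: "pms S = (\<Union>u\<in>S - {v}. pms_with S {v, u})"
  proof
    show "pms S \<subseteq> (\<Union>u\<in>S - {v}. pms_with S {v, u})"
    proof
      fix M assume M: "M \<in> pms S"
      then obtain u where "{v, u} \<in> M" "u \<noteq> v" "u \<in> S"
        using perfect_matching_on_partner v by (metis mem_Collect_eq pms_def)
      with M show "M \<in> (\<Union>u\<in>S - {v}. pms_with S {v, u})"
        by (auto simp: pms_with_def)
    qed
  qed (auto simp: pms_with_def)
  have "card (pms S) = (\<Sum>u\<in>S - {v}. card (pms_with S {v, u}))"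
    unfolding pms_split
  proof (rule card_UN_disjoint)
    show "finite (S - {v})" using Suc.prems by simp
    show "\<forall>u\<in>S - {v}. finite (pms_with S {v, u})"
      using finite_pms[OF Suc.prems(1)] by (simp add: pms_with_def)
    show "\<forall>u\<in>S - {v}. \<forall>u'\<in>S - {v}. u \<noteq> u' \<longrightarrow> pms_with S {v, u} \<inter> pms_with S {v, u'} = {}"
      by (auto simp: pms_with_def pms_def dest: perfect_matching_on_partner_unique)
  qed
  also have "\<dots> = (\<Sum>u\<in>S - {v}. pm_count n)"
  proof (rule sum.cong)
    fix u assume u: "u \<in> S - {v}"
    then have "card (pms_with S {v, u}) = card (pms (S - {v, u}))"
      using v by (intro card_pms_with) auto
    also have "\<dots> = pm_count n"
      using Suc u v by (intro Suc.IH) (auto simp: card_Diff_subset)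
    finally show "card (pms_with S {v, u}) = pm_count n" .
  qed simp
  also have "\<dots> = pm_count (Suc n)"
    using Suc v by simp
  finally show ?case .
qed

lemma card_pms_with_edge:
  assumes "finite S" "card S = 2 * Suc n" "a \<in> S" "b \<in> S" "a \<noteq> b"
  shows "card (pms_with S {a, b}) = pm_count n"
  using assms by (subst card_pms_with) (auto intro!: card_pms simp: card_Diff_subset)

lemma pms_nonempty: "finite S \<Longrightarrow> even (card S) \<Longrightarrow> pms S \<noteq> {}"
  using card_pms[of S "card S div 2"] pm_count_pos[of "card S div 2"] by auto

lemma card_Union_matching:
  assumes "finite M" "\<forall>e\<in>M. card e = 2" "pairwise disjnt M"
  shows "card (\<Union>M) = 2 * card M"
proof -
  have "card (\<Union>M) = sum card M"
    using assms by (intro card_Union_disjoint) (auto intro: card_ge_0_finite)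
  also have "\<dots> = 2 * card M"
    using assms(2) by simp
  finally show ?thesis .
qed

lemma exists_pm_extending:
  assumes "finite S" "even (card S)" "\<forall>e\<in>N. card e = 2" "pairwise disjnt N" "\<Union>N \<subseteq> S"
  obtains M where "M \<in> pms S" "N \<subseteq> M"
proof -
  define T where "T = \<Union>N"
  have "finite N"
    using assms(1,5) by (meson Sup_le_iff finite_Pow_iff finite_subset subsetI PowI)
  then have "card T = 2 * card N"
    using assms(3,4) card_Union_matching unfolding T_def by blast
  then have "even (card (S - T))"
    using assms(1,2,5) by (simp add: T_def card_Diff_subset finite_subset)
  then obtain L where L: "perfect_matching_on (S - T) L"
    using pms_nonempty[of "S - T"] assms(1) by (auto simp: pms_def)
  have "perfect_matching_on T N"
    using assms(3,4) unfolding T_def perfect_matching_on_def pairwise_def disjnt_def by auto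
  then have "perfect_matching_on (T \<union> (S - T)) (N \<union> L)"
    using L by (intro perfect_matching_on_Un) auto
  moreover have "T \<union> (S - T) = S"
    using assms(5) unfolding T_def by blast
  ultimately show thesis
    using that by (auto simp: pms_def)
qed

lemma perfect_matching_on_swap:
  fixes w :: "'a set \<Rightarrow> 'b::comm_monoid_add"
  assumes "finite S" "perfect_matching_on S M" "{p, q} \<in> M" "{r, s} \<in> M" "distinct [p, q, r, s]"
  obtains M' where "M' \<in> pms S" "{p, r} \<in> M'" "{q, s} \<in> M'" "M - {{p, q}, {r, s}} \<subseteq> M'"
    "sum w M' + w {p, q} + w {r, s} = sum w M + w {p, r} + w {q, s}"
proof -
  define N where "N = M - {{p, q}, {r, s}}"
  have ne: "{p, q} \<noteq> {r, s}"
    using assms(5) by (auto simp: doubleton_eq_iff)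
  have "perfect_matching_on (S - {p, q} - {r, s}) N"
    using perfect_matching_on_Diff[OF perfect_matching_on_Diff[OF assms(2,3)], of "{r, s}"]
      assms(4) ne unfolding N_def by (simp add: Diff_insert2 [symmetric])
  moreover have "S - {p, q} - {r, s} = S - {p, r} - {q, s}"
    by blast
  moreover have pqrs: "p \<in> S" "q \<in> S" "r \<in> S" "s \<in> S"
    using perfect_matching_on_edge[OF assms(2)] assms(3,4) by auto
  ultimately have N: "perfect_matching_on (S - {p, r} - {q, s}) N"
    by simp
  have qs: "perfect_matching_on (S - {p, r}) (insert {q, s} N)" "{q, s} \<notin> N"
    using perfect_matching_on_insert[OF N] pqrs assms(5) by auto
  have pr: "perfect_matching_on S (insert {p, r} (insert {q, s} N))" "{p, r} \<notin> insert {q, s} N"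
    using perfect_matching_on_insert[OF qs(1)] pqrs assms(5) by auto
  have fin: "finite N"
    using perfect_matching_on_finite[OF assms(1,2)] unfolding N_def by simp
  have "M = insert {p, q} (insert {r, s} N)" "{p, q} \<notin> insert {r, s} N" "{r, s} \<notin> N"
    using assms(3,4) ne unfolding N_def by blast+
  then have "sum w M = w {p, q} + w {r, s} + sum w N"
    using fin by (simp add: add.assoc)
  moreover have "sum w (insert {p, r} (insert {q, s} N)) = w {p, r} + w {q, s} + sum w N"
    using fin qs(2) pr(2) by (simp add: add.assoc)
  ultimately show thesis
    using pr(1) by (intro that[of "insert {p, r} (insert {q, s} N)"])
      (auto simp: N_def pms_def ac_simps)
qed

section \<open>Perfect matchings below a weight bound\<close>

definition pms_below :: "'a set \<Rightarrow> ('a set \<Rightarrow> real) \<Rightarrow> real \<Rightarrow> 'a set set set" where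
  "pms_below S w W = {M \<in> pms S. sum w M < W}"

definition max_pms_cover_edges :: "'a set \<Rightarrow> ('a set \<Rightarrow> real) \<Rightarrow> real \<Rightarrow> bool" where
  "max_pms_cover_edges S w W \<longleftrightarrow> (\<forall>p\<in>S. \<forall>q\<in>S. p \<noteq> q \<longrightarrow> (\<exists>M\<in>pms_with S {p, q}. sum w M = W))"

text \<open>The case of the induction step in which two edges \<open>va, vb\<close> at \<open>v\<close> lie in
  maximum-weight matchings only.\<close>

locale tight_cherry =
  fixes S :: "'a set" and w :: "'a set \<Rightarrow> real" and W :: real and v a b :: 'a
  assumes finite_S: "finite S" and even_card_S: "even (card S)"
    and upper: "\<And>M. M \<in> pms S \<Longrightarrow> sum w M \<le> W"
    and covered: "max_pms_cover_edges S w W"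
    and cherry: "v \<in> S" "a \<in> S" "b \<in> S" "distinct [v, a, b]"
    and tight_va: "\<And>M. M \<in> pms_with S {v, a} \<Longrightarrow> sum w M = W"
    and tight_vb: "\<And>M. M \<in> pms_with S {v, b} \<Longrightarrow> sum w M = W"
begin

definition R :: "'a set" where
  "R = S - {v, a, b}"

text \<open>Swapping \<open>vx, bz\<close> for \<open>vb, xz\<close> (resp. \<open>vx, ab\<close> for \<open>va, xb\<close>) gives a maximum-weight
  matching, so every perfect matching containing \<open>vx\<close> and \<open>bz\<close> (resp. \<open>ab\<close>) has this weight.\<close>

definition weight_vx_bz :: "'a \<Rightarrow> 'a \<Rightarrow> real" where
  "weight_vx_bz x z = W + w {v, x} - w {v, b} + w {b, z} - w {x, z}"

definition weight_vx_ab :: "'a \<Rightarrow> real" where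
  "weight_vx_ab x = W + w {v, x} - w {v, a} + w {a, b} - w {x, b}"

lemma in_R_iff: "x \<in> R \<longleftrightarrow> x \<in> S \<and> x \<noteq> v \<and> x \<noteq> a \<and> x \<noteq> b"
  by (auto simp: R_def)

lemma exists_pm_containing:
  assumes "\<forall>e\<in>N. card e = 2" "pairwise disjnt N" "\<Union>N \<subseteq> S"
  obtains M where "M \<in> pms S" "N \<subseteq> M"
  using exists_pm_extending[OF finite_S even_card_S assms] by blast

lemma weight_by_swap:
  assumes "M \<in> pms S" "{v, x} \<in> M" "{d, z} \<in> M" "distinct [v, x, d, z]"
    and tight: "\<And>M. M \<in> pms_with S {v, d} \<Longrightarrow> sum w M = W"
  shows "sum w M = W + w {v, x} - w {v, d} + w {d, z} - w {x, z}"
proof -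
  have "perfect_matching_on S M"
    using assms(1) by (simp add: pms_def)
  then obtain M' where M': "M' \<in> pms S" "{v, d} \<in> M'" "{x, z} \<in> M'" "M - {{v, x}, {d, z}} \<subseteq> M'"
    "sum w M' + w {v, x} + w {d, z} = sum w M + w {v, d} + w {x, z}"
    by (rule perfect_matching_on_swap[OF finite_S _ assms(2-4)])
  have "sum w M' = W"
    using M'(1,2) by (intro tight) (simp add: pms_with_def)
  with M'(5) show ?thesis by simp
qed

lemma distinct_v_b_R:
  assumes "x \<in> R" "z \<in> R" "x \<noteq> z"
  shows "distinct [v, x, b, z]"
  using assms cherry(4) by (auto simp: in_R_iff)

lemma weight_vx_bz:
  assumes "M \<in> pms S" "{v, x} \<in> M" "{b, z} \<in> M" "x \<in> R" "z \<in> R" "x \<noteq> z"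
  shows "sum w M = weight_vx_bz x z"
  unfolding weight_vx_bz_def
  by (rule weight_by_swap[OF assms(1-3) distinct_v_b_R[OF assms(4-6)] tight_vb])

lemma weight_vx_ab:
  assumes "M \<in> pms S" "{v, x} \<in> M" "{a, b} \<in> M" "x \<in> R"
  shows "sum w M = weight_vx_ab x"
proof -
  have "distinct [v, x, a, b]"
    using assms(4) cherry(4) by (auto simp: in_R_iff)
  then show ?thesis
    unfolding weight_vx_ab_def by (rule weight_by_swap[OF assms(1-3) _ tight_va])
qed

lemma exchange_at_b:
  assumes "x \<in> R" "y \<in> R" "y' \<in> R" "distinct [x, y, y']"
  shows "w {b, y} + w {x, y'} = w {b, y'} + w {x, y}"
proof -
  have d: "distinct [v, a, b, y, y', x]"
    using assms cherry(4) by (auto simp: in_R_iff)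
  have "\<forall>e\<in>{{v, a}, {b, y}, {y', x}}. card e = 2" "pairwise disjnt {{v, a}, {b, y}, {y', x}}"
    using d by (auto simp: pairwise_insert disjnt_def)
  moreover have "\<Union>{{v, a}, {b, y}, {y', x}} \<subseteq> S"
    using assms cherry by (simp add: in_R_iff)
  ultimately obtain M where M: "M \<in> pms S" "{{v, a}, {b, y}, {y', x}} \<subseteq> M"
    by (rule exists_pm_containing)
  then have "perfect_matching_on S M"
    by (simp add: pms_def)
  moreover have "{b, y} \<in> M" "{y', x} \<in> M" "distinct [b, y, y', x]"
    using M d by auto
  ultimately obtain M' where M': "M' \<in> pms S" "{b, y'} \<in> M'" "{y, x} \<in> M'"
    "M - {{b, y}, {y', x}} \<subseteq> M'"
    "sum w M' + w {b, y} + w {y', x} = sum w M + w {b, y'} + w {y, x}"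
    by (rule perfect_matching_on_swap[OF finite_S])
  have "{v, a} \<in> M - {{b, y}, {y', x}}"
    using M d by (auto simp: doubleton_eq_iff)
  then have "sum w M' = W" "sum w M = W"
    using M M' by (auto intro!: tight_va simp: pms_with_def)
  then show ?thesis
    using M'(5) by (simp add: insert_commute)
qed

lemma weight_vx_bz_indep:
  assumes "x \<in> R" "z \<in> R" "z' \<in> R" "z \<noteq> x" "z' \<noteq> x"
  shows "weight_vx_bz x z = weight_vx_bz x z'"
proof (cases "z = z'")
  case False
  with assms have "w {b, z} + w {x, z'} = w {b, z'} + w {x, z}"
    by (intro exchange_at_b) auto
  then show ?thesis by (simp add: weight_vx_bz_def)
qed simp

lemma weight_vx_ab_minus_bz:
  assumes "x \<in> R" "x' \<in> R" "z \<in> R" "z \<noteq> x" "z \<noteq> x'"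
  shows "weight_vx_ab x - weight_vx_bz x z = weight_vx_ab x' - weight_vx_bz x' z"
proof (cases "x = x'")
  case False
  with assms have "w {b, x'} + w {z, x} = w {b, x} + w {z, x'}"
    by (intro exchange_at_b) auto
  then show ?thesis by (simp add: weight_vx_ab_def weight_vx_bz_def insert_commute)
qed simp

lemma exists_pm_with_two_edges:
  assumes "p \<in> S" "q \<in> S" "r \<in> S" "s \<in> S" "distinct [p, q, r, s]"
  obtains M where "M \<in> pms S" "{p, q} \<in> M" "{r, s} \<in> M"
proof -
  have "\<forall>e\<in>{{p, q}, {r, s}}. card e = 2" "pairwise disjnt {{p, q}, {r, s}}"
    using assms(5) by (auto simp: pairwise_insert disjnt_def)
  moreover have "\<Union>{{p, q}, {r, s}} \<subseteq> S"
    using assms(1-4) by simp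
  ultimately obtain M where "M \<in> pms S" "{{p, q}, {r, s}} \<subseteq> M"
    by (rule exists_pm_containing)
  then show thesis
    using that by simp
qed

lemma weight_vx_ab_le:
  assumes "x \<in> R"
  shows "weight_vx_ab x \<le> W"
proof -
  have "distinct [v, x, a, b]" "x \<in> S"
    using assms cherry(4) by (auto simp: in_R_iff)
  then obtain M where "M \<in> pms S" "{v, x} \<in> M" "{a, b} \<in> M"
    using exists_pm_with_two_edges cherry by blast
  then show ?thesis
    using weight_vx_ab[of M x] upper[of M] assms by simp
qed

lemma weight_vx_bz_le:
  assumes "x \<in> R" "z \<in> R" "x \<noteq> z"
  shows "weight_vx_bz x z \<le> W"
proof -
  have "distinct [v, x, b, z]" "x \<in> S" "z \<in> S"
    using distinct_v_b_R[OF assms] assms by (auto simp: in_R_iff)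
  then obtain M where "M \<in> pms S" "{v, x} \<in> M" "{b, z} \<in> M"
    using exists_pm_with_two_edges cherry by blast
  then show ?thesis
    using weight_vx_bz[of M x z] upper[of M] assms by simp
qed

lemma partner_of_v_in_R:
  assumes "M \<in> pms S" "{v, x} \<in> M" "{v, a} \<notin> M" "{v, b} \<notin> M"
  shows "x \<in> R"
proof -
  have "card {v, x} = 2" "{v, x} \<subseteq> S"
    using perfect_matching_on_edge[of S M] assms(1,2) by (auto simp: pms_def)
  moreover have "x \<noteq> a" "x \<noteq> b"
    using assms(2-4) by auto
  ultimately show ?thesis
    using cherry by (auto simp: in_R_iff card_insert_if split: if_splits)
qed

lemma pms_below_avoids_cherry:
  assumes "M \<in> pms_below S w W"
  shows "{v, a} \<notin> M" "{v, b} \<notin> M"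
  using assms tight_va[of M] tight_vb[of M] by (auto simp: pms_below_def pms_with_def)

lemma edge_ab_avoids_cherry:
  assumes "M \<in> pms S" "{a, b} \<in> M"
  shows "{v, a} \<notin> M" "{v, b} \<notin> M"
proof -
  have pm: "perfect_matching_on S M"
    using assms(1) by (simp add: pms_def)
  show "{v, a} \<notin> M"
  proof
    assume "{v, a} \<in> M"
    then have "v = b"
      using perfect_matching_on_partner_unique[OF pm, of a v b] assms(2)
      by (simp add: insert_commute)
    then show False using cherry(4) by simp
  qed
  show "{v, b} \<notin> M"
  proof
    assume "{v, b} \<in> M"
    then have "v = a"
      using perfect_matching_on_partner_unique[OF pm, of b v a] assms(2)
      by (simp add: insert_commute)
    then show False using cherry(4) by simp
  qed
qed

lemma partner_of_b_in_R:
  assumes "M \<in> pms S" "{v, x} \<in> M" "x \<in> R" "{b, z} \<in> M" "{a, b} \<notin> M"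
  shows "z \<in> R" "z \<noteq> x"
proof -
  have pm: "perfect_matching_on S M"
    using assms(1) by (simp add: pms_def)
  then have "card {b, z} = 2" "{b, z} \<subseteq> S"
    using perfect_matching_on_edge assms(4) by blast+
  then have "z \<noteq> b" "z \<in> S"
    by (auto simp: card_insert_if split: if_splits)
  moreover have "z \<noteq> v"
  proof
    assume "z = v"
    then have "{v, b} \<in> M" using assms(4) by (simp add: insert_commute)
    then have "x = b" using perfect_matching_on_partner_unique[OF pm assms(2)] by simp
    then show False using assms(3) by (simp add: in_R_iff)
  qed
  moreover have "z \<noteq> a"
    using assms(4,5) by (auto simp: insert_commute)
  ultimately show "z \<in> R"
    by (simp add: in_R_iff)
  show "z \<noteq> x"
  proof
    assume "z = x"
    then have "{x, b} \<in> M" "{x, v} \<in> M" using assms(2,4) by (simp_all add: insert_commute)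
    then have "b = v" by (rule perfect_matching_on_partner_unique[OF pm])
    then show False using cherry(4) by simp
  qed
qed

lemma card_R: "card R + 3 = card S"
proof -
  have "card {v, a, b} = 3" "{v, a, b} \<subseteq> S"
    using cherry by auto
  moreover have "card {v, a, b} \<le> card S"
    using calculation(2) finite_S by (rule card_mono[rotated])
  ultimately show ?thesis
    unfolding R_def using finite_S by (simp add: card_Diff_subset)
qed

lemma odd_card_R: "odd (card R)"
  using card_R even_card_S by presburger

lemma third_in_R:
  assumes "x \<in> R" "y \<in> R" "x \<noteq> y"
  obtains z where "z \<in> R" "z \<noteq> x" "z \<noteq> y"
proof -
  have "R \<noteq> {x, y}"
    using odd_card_R assms(3) by auto
  then show thesis
    using that assms by blast
qed

lemma partner_of_v:
  assumes "M \<in> pms S"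
  obtains x where "{v, x} \<in> M"
  using perfect_matching_on_partner[of S M v] assms cherry(1) by (auto simp: pms_def)

lemma partner_of_b:
  assumes "M \<in> pms S"
  obtains z where "{b, z} \<in> M"
  using perfect_matching_on_partner[of S M b] assms cherry(3) by (auto simp: pms_def)

lemma max_pm_with_edge:
  assumes "p \<in> S" "q \<in> S" "p \<noteq> q"
  obtains M where "M \<in> pms S" "{p, q} \<in> M" "sum w M = W"
  using covered assms by (auto simp: max_pms_cover_edges_def pms_with_def)

lemma max_pm_with_v_edge:
  assumes "x \<in> R"
  obtains M where "M \<in> pms S" "{v, x} \<in> M" "sum w M = W"
proof (rule max_pm_with_edge)
  show "v \<in> S" "x \<in> S" "v \<noteq> x"
    using assms cherry(1) by (auto simp: in_R_iff)
qed

lemma weight_vx_ab_attains_max: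
  obtains x where "x \<in> R" "weight_vx_ab x = W"
proof -
  obtain M where M: "M \<in> pms S" "{a, b} \<in> M" "sum w M = W"
  proof (rule max_pm_with_edge)
    show "a \<in> S" "b \<in> S" "a \<noteq> b"
      using cherry by auto
  qed
  obtain x where x: "{v, x} \<in> M"
    using partner_of_v[OF M(1)] .
  have xR: "x \<in> R"
    using partner_of_v_in_R[OF M(1) x edge_ab_avoids_cherry[OF M(1,2)]] .
  moreover have "weight_vx_ab x = W"
    using weight_vx_ab[OF M(1) x M(2) xR] M(3) by simp
  ultimately show thesis
    by (rule that)
qed

lemma edge_ab_notin_pms_below:
  assumes M0: "M0 \<in> pms_below S w W"
  shows "{a, b} \<notin> M0"
proof
  assume ab0: "{a, b} \<in> M0"
  have M0': "M0 \<in> pms S" "sum w M0 < W"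
    using M0 by (auto simp: pms_below_def)
  obtain x0 where x0: "{v, x0} \<in> M0"
    using partner_of_v[OF M0'(1)] .
  have x0R: "x0 \<in> R"
    using partner_of_v_in_R[OF M0'(1) x0 pms_below_avoids_cherry[OF M0]] .
  have ab_x0: "weight_vx_ab x0 < W"
    using weight_vx_ab[OF M0'(1) x0 ab0 x0R] M0'(2) by simp
  obtain M1 where M1: "M1 \<in> pms S" "{v, x0} \<in> M1" "sum w M1 = W"
    using max_pm_with_v_edge[OF x0R] .
  have "{a, b} \<notin> M1"
    using weight_vx_ab[OF M1(1,2) _ x0R] M1(3) ab_x0 by auto
  moreover obtain z1 where z1: "{b, z1} \<in> M1"
    using partner_of_b[OF M1(1)] .
  ultimately have z1R: "z1 \<in> R" "z1 \<noteq> x0"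
    using partner_of_b_in_R[OF M1(1,2) x0R z1] by auto
  then have "weight_vx_bz x0 z1 = W"
    using weight_vx_bz[OF M1(1,2) z1 x0R] M1(3) by simp
  obtain x2 where x2R: "x2 \<in> R" and ab_x2: "weight_vx_ab x2 = W"
    by (rule weight_vx_ab_attains_max)
  then have "x0 \<noteq> x2"
    using ab_x0 by auto
  then obtain z where z: "z \<in> R" "z \<noteq> x0" "z \<noteq> x2"
    by (rule third_in_R[OF x0R x2R])
  have "weight_vx_bz x0 z = W"
    using weight_vx_bz_indep[OF x0R z1R(1) z(1) z1R(2) z(2)] \<open>weight_vx_bz x0 z1 = W\<close> by simp
  moreover have "weight_vx_ab x2 - weight_vx_bz x2 z = weight_vx_ab x0 - weight_vx_bz x0 z"
    using weight_vx_ab_minus_bz[OF x2R x0R z(1) z(3,2)] .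
  moreover have "weight_vx_bz x2 z \<le> W"
    using weight_vx_bz_le[OF x2R z(1)] z(3) by simp
  ultimately show False
    using ab_x0 ab_x2 by simp
qed

lemma pms_below_witness:
  assumes M0: "M0 \<in> pms_below S w W"
  obtains x0 z0 where "x0 \<in> R" "z0 \<in> R" "z0 \<noteq> x0"
    "weight_vx_bz x0 z0 < W" "weight_vx_ab x0 = W"
proof -
  have M0': "M0 \<in> pms S" "sum w M0 < W"
    using M0 by (auto simp: pms_below_def)
  obtain x0 where x0: "{v, x0} \<in> M0"
    using partner_of_v[OF M0'(1)] .
  have x0R: "x0 \<in> R"
    using partner_of_v_in_R[OF M0'(1) x0 pms_below_avoids_cherry[OF M0]] .
  obtain z0 where z0: "{b, z0} \<in> M0"
    using partner_of_b[OF M0'(1)] .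
  have z0R: "z0 \<in> R" "z0 \<noteq> x0"
    using partner_of_b_in_R[OF M0'(1) x0 x0R z0 edge_ab_notin_pms_below[OF M0]] by auto
  have gap: "weight_vx_bz x0 z0 < W"
    using weight_vx_bz[OF M0'(1) x0 z0 x0R z0R(1)] z0R(2) M0'(2) by simp
  obtain M1 where M1: "M1 \<in> pms S" "{v, x0} \<in> M1" "sum w M1 = W"
    using max_pm_with_v_edge[OF x0R] .
  have "{a, b} \<in> M1"
  proof (rule ccontr)
    assume "{a, b} \<notin> M1"
    moreover obtain z1 where z1: "{b, z1} \<in> M1"
      using partner_of_b[OF M1(1)] .
    ultimately have z1R: "z1 \<in> R" "z1 \<noteq> x0"
      using partner_of_b_in_R[OF M1(1,2) x0R z1] by auto
    then have "sum w M1 = weight_vx_bz x0 z0"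
      using weight_vx_bz[OF M1(1,2) z1 x0R] weight_vx_bz_indep[OF x0R z1R(1) z0R(1) z1R(2) z0R(2)]
      by simp
    then show False
      using M1(3) gap by simp
  qed
  then have "weight_vx_ab x0 = W"
    using weight_vx_ab[OF M1(1,2) _ x0R] M1(3) by simp
  with x0R z0R gap show thesis
    by (rule that)
qed

lemma pms_below_if_avoids_triangle:
  assumes M0: "M0 \<in> pms_below S w W"
    and M: "M \<in> pms S" "{v, a} \<notin> M" "{v, b} \<notin> M" "{a, b} \<notin> M"
  shows "M \<in> pms_below S w W"
proof -
  obtain x0 z0 where x0R: "x0 \<in> R" and z0R: "z0 \<in> R" "z0 \<noteq> x0"
    and gap: "weight_vx_bz x0 z0 < W" and ab_x0: "weight_vx_ab x0 = W"
    by (rule pms_below_witness[OF M0])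
  obtain x where x: "{v, x} \<in> M"
    using partner_of_v[OF M(1)] .
  have xR: "x \<in> R"
    using partner_of_v_in_R[OF M(1) x M(2,3)] .
  obtain z where z: "{b, z} \<in> M"
    using partner_of_b[OF M(1)] .
  have zR: "z \<in> R" "z \<noteq> x"
    using partner_of_b_in_R[OF M(1) x xR z M(4)] by auto
  have "weight_vx_bz x z < W"
  proof (cases "x = x0")
    case True
    then show ?thesis
      using weight_vx_bz_indep[OF x0R zR(1) z0R(1)] zR(2) z0R(2) gap by simp
  next
    case False
    then obtain z' where z': "z' \<in> R" "z' \<noteq> x" "z' \<noteq> x0"
      by (rule third_in_R[OF xR x0R])
    have "weight_vx_bz x z = weight_vx_bz x z'"
      using weight_vx_bz_indep[OF xR zR(1) z'(1) zR(2) z'(2)] .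
    moreover have "weight_vx_ab x - weight_vx_bz x z' = weight_vx_ab x0 - weight_vx_bz x0 z'"
      using weight_vx_ab_minus_bz[OF xR x0R z'(1) z'(2,3)] .
    moreover have "weight_vx_bz x0 z' = weight_vx_bz x0 z0"
      using weight_vx_bz_indep[OF x0R z'(1) z0R(1) z'(3) z0R(2)] .
    ultimately show ?thesis
      using weight_vx_ab_le[OF xR] ab_x0 gap by simp
  qed
  then show ?thesis
    using weight_vx_bz[OF M(1) x z xR zR(1)] zR(2) M(1) by (simp add: pms_below_def)
qed

lemma two_le_of_pms_below:
  assumes "card S = 2 * Suc n" "pms_below S w W \<noteq> {}"
  shows "2 \<le> n"
proof -
  obtain M0 where "M0 \<in> pms_below S w W"
    using assms(2) by blast
  then obtain x0 z0 where "x0 \<in> R" "z0 \<in> R" "z0 \<noteq> x0"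
    by (rule pms_below_witness)
  moreover have "finite R"
    using finite_S by (simp add: R_def)
  ultimately have "card {x0, z0} \<le> card R"
    by (intro card_mono) auto
  then show ?thesis
    using card_R assms(1) \<open>z0 \<noteq> x0\<close> by simp
qed

lemma card_pms_below_gt:
  assumes card_S: "card S = 2 * Suc n" and nonempty: "pms_below S w W \<noteq> {}"
  shows "pm_count n < card (pms_below S w W)"
proof -
  obtain M0 where M0: "M0 \<in> pms_below S w W"
    using nonempty by blast
  have n: "2 \<le> n"
    using two_le_of_pms_below[OF card_S nonempty] .
  define X where "X = pms_with S {v, a} \<union> pms_with S {v, b} \<union> pms_with S {a, b}"
  have finite_X: "finite X"
    using finite_pms[OF finite_S] by (simp add: X_def pms_with_def)
  have "pms S - X \<subseteq> pms_below S w W"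
  proof
    fix M assume "M \<in> pms S - X"
    then have "M \<in> pms S" "{v, a} \<notin> M" "{v, b} \<notin> M" "{a, b} \<notin> M"
      by (auto simp: X_def pms_with_def)
    then show "M \<in> pms_below S w W"
      by (rule pms_below_if_avoids_triangle[OF M0])
  qed
  then have "card (pms S - X) \<le> card (pms_below S w W)"
    using finite_pms[OF finite_S] by (intro card_mono) (simp_all add: pms_below_def)
  moreover have "card X \<le> 3 * pm_count n"
  proof -
    have "card X \<le> card (pms_with S {v, a}) + card (pms_with S {v, b}) + card (pms_with S {a, b})"
      unfolding X_def by (meson card_Un_le add_le_mono order_trans le_refl)
    also have "\<dots> = 3 * pm_count n"
      using card_pms_with_edge[OF finite_S card_S] cherry by simp
    finally show ?thesis .
  qed
  moreover have "card (pms S) - card X \<le> card (pms S - X)"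
    using diff_card_le_card_Diff[OF finite_X] .
  moreover have "card (pms S) = (2 * n + 1) * pm_count n"
    using card_pms[OF finite_S card_S] by simp
  moreover have "pm_count n < (2 * n + 1) * pm_count n - 3 * pm_count n"
    using n pm_count_pos[of n] by (simp add: diff_mult_distrib[symmetric])
  ultimately show ?thesis
    by linarith
qed

end

lemma pms_with_subset_pms_below:
  assumes "\<And>M. M \<in> pms S \<Longrightarrow> sum w M \<le> W" "\<not> (\<exists>M\<in>pms_with S e. sum w M = W)"
  shows "pms_with S e \<subseteq> pms_below S w W"
  using assms by (force simp: pms_with_def pms_below_def)

lemma uncovered_edge:
  assumes "\<And>M. M \<in> pms S \<Longrightarrow> sum w M \<le> W" "\<not> max_pms_cover_edges S w W"
  obtains p q where "p \<in> S" "q \<in> S" "p \<noteq> q" "pms_with S {p, q} \<subseteq> pms_below S w W"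
  using assms pms_with_subset_pms_below[OF assms(1)] unfolding max_pms_cover_edges_def by blast

lemma card_pms_below_ge:
  assumes "finite S" "card S = 2 * Suc n" "\<And>M. M \<in> pms S \<Longrightarrow> sum w M \<le> W"
    and gt: "max_pms_cover_edges S w W \<Longrightarrow> pm_count n < card (pms_below S w W)"
  shows "pm_count n \<le> card (pms_below S w W)"
proof (cases "max_pms_cover_edges S w W")
  case False
  then obtain p q where pq: "p \<in> S" "q \<in> S" "p \<noteq> q" "pms_with S {p, q} \<subseteq> pms_below S w W"
    using uncovered_edge assms(3) by blast
  have "card (pms_with S {p, q}) \<le> card (pms_below S w W)"
    using pq(4) finite_pms[OF assms(1)] by (intro card_mono) (auto simp: pms_below_def)
  then show ?thesis
    using card_pms_with_edge[OF assms(1,2) pq(1-3)] by simp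
qed (use gt in simp)

lemma pms_with_insert_edge:
  assumes "finite S" "N \<in> pms (S - e)" "e \<subseteq> S" "card e = 2"
  shows "insert e N \<in> pms_with S e" "sum w (insert e N) = w e + sum w N"
proof -
  have N: "perfect_matching_on (S - e) N"
    using assms(2) by (simp add: pms_def)
  show "insert e N \<in> pms_with S e"
    using perfect_matching_on_insert(1)[OF N assms(3,4)] by (simp add: pms_with_def pms_def)
  show "sum w (insert e N) = w e + sum w N"
    using perfect_matching_on_insert(2)[OF N assms(3,4)] perfect_matching_on_finite[OF _ N] assms(1)
    by simp
qed

lemma card_pms_below_with:
  assumes "finite S" "e \<subseteq> S" "card e = 2"
  shows "card (pms_with S e \<inter> pms_below S w W) = card (pms_below (S - e) w (W - w e))"
proof -
  have "bij_betw (\<lambda>M. M - {e}) (pms_with S e \<inter> pms_below S w W) (pms_below (S - e) w (W - w e))"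
  proof (rule bij_betw_byWitness[where f' = "insert e"])
    show "\<forall>M\<in>pms_with S e \<inter> pms_below S w W. insert e (M - {e}) = M"
      by (auto simp: pms_with_def)
    show "\<forall>N\<in>pms_below (S - e) w (W - w e). insert e N - {e} = N"
      using perfect_matching_on_insert(2)[OF _ assms(2,3)] by (auto simp: pms_below_def pms_def)
    show "(\<lambda>M. M - {e}) ` (pms_with S e \<inter> pms_below S w W) \<subseteq> pms_below (S - e) w (W - w e)"
    proof clarify
      fix M assume M: "M \<in> pms_with S e" "M \<in> pms_below S w W"
      then have N: "M - {e} \<in> pms (S - e)"
        using perfect_matching_on_Diff[of S M e] by (simp add: pms_with_def pms_def)
      moreover have "insert e (M - {e}) = M"
        using M(1) by (auto simp: pms_with_def)
      ultimately show "M - {e} \<in> pms_below (S - e) w (W - w e)"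
        using M(2) pms_with_insert_edge(2)[OF assms(1) N assms(2,3), of w]
        by (simp add: pms_below_def)
    qed
    show "insert e ` pms_below (S - e) w (W - w e) \<subseteq> pms_with S e \<inter> pms_below S w W"
    proof clarify
      fix N assume "N \<in> pms_below (S - e) w (W - w e)"
      then have N: "N \<in> pms (S - e)" "sum w N < W - w e"
        by (simp_all add: pms_below_def)
      then show "insert e N \<in> pms_with S e \<inter> pms_below S w W"
        using pms_with_insert_edge(1)[OF assms(1) N(1) assms(2,3)]
          pms_with_insert_edge(2)[OF assms(1) N(1) assms(2,3), of w]
        by (simp add: pms_with_def pms_below_def)
    qed
  qed
  then show ?thesis
    by (rule bij_betw_same_card)
qed

lemma sum_card_pms_below_with_le:
  assumes "finite S" "U \<subseteq> S"
  shows "(\<Sum>u\<in>U. card (pms_with S {v, u} \<inter> pms_below S w W)) \<le> card (pms_below S w W)"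
proof -
  have "(\<Sum>u\<in>U. card (pms_with S {v, u} \<inter> pms_below S w W))
      = card (\<Union>u\<in>U. pms_with S {v, u} \<inter> pms_below S w W)"
  proof (rule card_UN_disjoint[symmetric])
    show "\<forall>u\<in>U. \<forall>u'\<in>U. u \<noteq> u' \<longrightarrow>
        (pms_with S {v, u} \<inter> pms_below S w W) \<inter> (pms_with S {v, u'} \<inter> pms_below S w W) = {}"
      by (auto simp: pms_with_def pms_def dest: perfect_matching_on_partner_unique)
  qed (use assms finite_pms[OF assms(1)] finite_subset in \<open>auto simp: pms_with_def\<close>)
  also have "\<dots> \<le> card (pms_below S w W)"
    using finite_pms[OF assms(1)] by (intro card_mono) (auto simp: pms_below_def)
  finally show ?thesis .
qed

lemma card_pms_below_with_ge:
  assumes fin: "finite S" and card_S: "card S = 2 * Suc (Suc n)"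
    and upper: "\<And>M. M \<in> pms S \<Longrightarrow> sum w M \<le> W"
    and e: "{v, u} \<subseteq> S" "card {v, u} = 2"
    and nonempty: "pms_with S {v, u} \<inter> pms_below S w W \<noteq> {}"
    and ge: "\<And>T W'. finite T \<Longrightarrow> card T = 2 * Suc n \<Longrightarrow> (\<And>M. M \<in> pms T \<Longrightarrow> sum w M \<le> W') \<Longrightarrow>
      pms_below T w W' \<noteq> {} \<Longrightarrow> pm_count n \<le> card (pms_below T w W')"
  shows "pm_count n \<le> card (pms_with S {v, u} \<inter> pms_below S w W)"
proof -
  have eq: "card (pms_with S {v, u} \<inter> pms_below S w W)
      = card (pms_below (S - {v, u}) w (W - w {v, u}))"
    by (rule card_pms_below_with[OF fin e])
  show ?thesis
    unfolding eq
  proof (rule ge)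
    show "finite (S - {v, u})" using fin by simp
    show "card (S - {v, u}) = 2 * Suc n"
      using card_S e fin by (simp add: card_Diff_subset)
    show "sum w N \<le> W - w {v, u}" if "N \<in> pms (S - {v, u})" for N
      using pms_with_insert_edge(1)[OF fin that e] pms_with_insert_edge(2)[OF fin that e, of w]
        upper[of "insert {v, u} N"]
      by (simp add: pms_with_def)
    have "finite (pms_with S {v, u} \<inter> pms_below S w W)"
      using finite_pms[OF fin] by (simp add: pms_with_def)
    then show "pms_below (S - {v, u}) w (W - w {v, u}) \<noteq> {}"
      using eq nonempty by auto
  qed
qed

lemma card_pms_below_gt_few_tight:
  assumes fin: "finite S" and card_S: "card S = 2 * Suc (Suc n)"
    and upper: "\<And>M. M \<in> pms S \<Longrightarrow> sum w M \<le> W" and v: "v \<in> S"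
    and few_tight: "card {u \<in> S - {v}. pms_with S {v, u} \<inter> pms_below S w W = {}} \<le> 1"
    and ge: "\<And>T W'. finite T \<Longrightarrow> card T = 2 * Suc n \<Longrightarrow> (\<And>M. M \<in> pms T \<Longrightarrow> sum w M \<le> W') \<Longrightarrow>
      pms_below T w W' \<noteq> {} \<Longrightarrow> pm_count n \<le> card (pms_below T w W')"
  shows "pm_count (Suc n) < card (pms_below S w W)"
proof -
  define Z where "Z u = pms_with S {v, u} \<inter> pms_below S w W" for u
  define U where "U = {u \<in> S - {v}. Z u \<noteq> {}}"
  have "S - {v} = U \<union> {u \<in> S - {v}. Z u = {}}"
    by (auto simp: U_def)
  then have "card (S - {v}) \<le> card U + card {u \<in> S - {v}. Z u = {}}"
    by (metis card_Un_le)
  moreover have "card (S - {v}) = 2 * n + 3"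
    using card_S v fin by simp
  ultimately have card_U: "2 * n + 2 \<le> card U"
    using few_tight unfolding Z_def by linarith
  have "pm_count n \<le> card (Z u)" if u: "u \<in> U" for u
  proof -
    have e: "{v, u} \<subseteq> S" "card {v, u} = 2" and "Z u \<noteq> {}"
      using u v by (auto simp: U_def)
    then show ?thesis
      unfolding Z_def using card_pms_below_with_ge[OF fin card_S upper e _ ge] by blast
  qed
  then have "card U * pm_count n \<le> (\<Sum>u\<in>U. card (Z u))"
    using sum_mono[of U "\<lambda>_. pm_count n" "\<lambda>u. card (Z u)"] by simp
  also have "\<dots> \<le> card (pms_below S w W)"
    unfolding Z_def by (rule sum_card_pms_below_with_le[OF fin]) (auto simp: U_def)
  finally have "card U * pm_count n \<le> card (pms_below S w W)" .
  moreover have "pm_count (Suc n) < (2 * n + 2) * pm_count n"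
    using pm_count_pos[of n] by simp
  ultimately show ?thesis
    using card_U by (meson le_trans less_le_trans mult_le_mono1)
qed

lemma card_pms_below_gt_if_covered:
  assumes "finite S" "card S = 2 * Suc n" "\<And>M. M \<in> pms S \<Longrightarrow> sum w M \<le> W"
    "max_pms_cover_edges S w W" "pms_below S w W \<noteq> {}"
  shows "pm_count n < card (pms_below S w W)"
  using assms
proof (induction n arbitrary: S W)
  case 0
  then obtain v u where S: "S = {v, u}" "v \<noteq> u"
    by (auto simp: card_2_iff)
  then obtain M where "M \<in> pms_with S {v, u}" "sum w M = W"
    using "0.prems"(4) by (auto simp: max_pms_cover_edges_def)
  then have "pms_below S w W = {}"
    using S by (auto simp: pms_with_def pms_below_def pms_pair)
  then show ?case
    using "0.prems"(5) by simp
next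
  case (Suc n)
  note fin = Suc.prems(1) and card_S = Suc.prems(2) and upper = Suc.prems(3)
  have ge: "pm_count n \<le> card (pms_below T w W')"
    if "finite T" "card T = 2 * Suc n" "\<And>M. M \<in> pms T \<Longrightarrow> sum w M \<le> W'" "pms_below T w W' \<noteq> {}"
    for T W'
    using that by (intro card_pms_below_ge) (auto intro: Suc.IH)
  obtain v where v: "v \<in> S"
    using card_S by fastforce
  define tight where "tight = {u \<in> S - {v}. pms_with S {v, u} \<inter> pms_below S w W = {}}"
  show ?case
  proof (cases "card tight \<le> 1")
    case True
    then show ?thesis
      using card_pms_below_gt_few_tight[OF fin card_S upper v _ ge] unfolding tight_def by blast
  next
    case False
    moreover have "finite tight"
      using fin by (simp add: tight_def)
    ultimately have "\<not> (\<forall>a\<in>tight. \<forall>b\<in>tight. a = b)"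
      using card_le_Suc0_iff_eq[of tight] by simp
    then obtain a b where ab: "a \<in> tight" "b \<in> tight" "a \<noteq> b"
      by blast
    have tight_sum: "sum w M = W" if "u \<in> tight" "M \<in> pms_with S {v, u}" for u M
      using that upper[of M] by (force simp: tight_def pms_with_def pms_below_def)
    interpret tight_cherry S w W v a b
      using Suc.prems(1,3,4) v ab tight_sum card_S by unfold_locales (auto simp: tight_def)
    show ?thesis
      using card_pms_below_gt[OF card_S Suc.prems(5)] .
  qed
qed

lemma pms_below_eq_pms_with:
  assumes "finite S" "card S = 2 * Suc n" "\<And>M. M \<in> pms S \<Longrightarrow> sum w M \<le> W"
    "pms_below S w W \<noteq> {}" "card (pms_below S w W) \<le> pm_count n"
  obtains p q where "p \<in> S" "q \<in> S" "p \<noteq> q" "pms_below S w W = pms_with S {p, q}"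
proof -
  have "\<not> max_pms_cover_edges S w W"
    using card_pms_below_gt_if_covered[OF assms(1-3) _ assms(4)] assms(5) by linarith
  then obtain p q where pq: "p \<in> S" "q \<in> S" "p \<noteq> q" "pms_with S {p, q} \<subseteq> pms_below S w W"
    using uncovered_edge assms(3) by blast
  have "finite (pms_below S w W)"
    using finite_pms[OF assms(1)] by (simp add: pms_below_def)
  moreover have "card (pms_with S {p, q}) \<le> card (pms_below S w W)"
    using pq(4) calculation by (rule card_mono[rotated])
  ultimately have "pms_with S {p, q} = pms_below S w W"
    using card_pms_with_edge[OF assms(1,2) pq(1-3)] assms(5) pq(4) by (intro card_subset_eq) auto
  then show thesis
    using that pq(1-3) by simp
qed

section \<open>The perfect matching polytope\<close>

lemma perfect_matching_iff_on_UNIV: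
  assumes "even CARD('v)"
  shows "perfect_matching (M :: 'v::finite set set) \<longleftrightarrow> perfect_matching_on UNIV M"
proof -
  have card_Union: "card (\<Union>M) = 2 * card M"
    if "\<forall>e\<in>M. card e = 2" "\<forall>e\<in>M. \<forall>f\<in>M. e \<noteq> f \<longrightarrow> e \<inter> f = {}"
    using that by (intro card_Union_matching) (auto simp: pairwise_def disjnt_def)
  show ?thesis
  proof
    assume "perfect_matching M"
    then have M: "\<forall>e\<in>M. card e = 2" "\<forall>e\<in>M. \<forall>f\<in>M. e \<noteq> f \<longrightarrow> e \<inter> f = {}"
      "card M = CARD('v) div 2"
      unfolding perfect_matching_def edges_K_def by auto
    then have "card (\<Union>M) = CARD('v)"
      using card_Union assms by simp
    then have "\<Union>M = UNIV"
      using card_subset_eq[of UNIV "\<Union>M"] by simp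
    then show "perfect_matching_on UNIV M"
      using M unfolding perfect_matching_on_def by simp
  next
    assume "perfect_matching_on UNIV M"
    then have M: "\<forall>e\<in>M. card e = 2" "\<forall>e\<in>M. \<forall>f\<in>M. e \<noteq> f \<longrightarrow> e \<inter> f = {}" "\<Union>M = UNIV"
      unfolding perfect_matching_on_def by auto
    then have "card M = CARD('v) div 2"
      using card_Union by simp
    then show "perfect_matching M"
      using M unfolding perfect_matching_def edges_K_def by auto
  qed
qed

lemma pm_vertices_eq:
  assumes "even CARD('v)"
  shows "(pm_vertices :: (real ^ ('v::finite set)) set) = char_vec ` pms UNIV"
proof -
  have "{M. perfect_matching M} = pms (UNIV :: 'v set)"
    using perfect_matching_iff_on_UNIV[OF assms] by (auto simp: pms_def)
  then show ?thesis
    unfolding pm_vertices_def by simp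
qed

lemma char_vec_nth: "char_vec M $ e = (if e \<in> M then 1 else 0)"
  unfolding char_vec_def by simp

lemma inner_char_vec: "inner c (char_vec (M :: 'v::finite set set)) = (\<Sum>e\<in>M. c $ e)"
proof -
  have "inner c (char_vec M) = (\<Sum>e\<in>UNIV. if e \<in> M then c $ e else 0)"
    unfolding inner_vec_def char_vec_def by (intro sum.cong) auto
  also have "\<dots> = (\<Sum>e\<in>M. c $ e)"
    by (simp add: sum.If_cases)
  finally show ?thesis .
qed

lemma inj_char_vec: "inj (char_vec :: 'v::finite set set \<Rightarrow> _)"
proof (rule injI)
  fix M M' :: "'v set set"
  assume "char_vec M = char_vec M'"
  then have "(if e \<in> M then 1 else 0 :: real) = (if e \<in> M' then 1 else 0)" for e
    by (metis char_vec_nth)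
  then show "M = M'"
    by (metis one_neq_zero subsetI subset_antisym)
qed

lemma polytope_pm_polytope: "polytope (pm_polytope :: (real ^ ('v::finite set)) set)"
  unfolding pm_polytope_def pm_vertices_def by (intro polytope_convex_hull) simp

lemma face_subset_facet:
  fixes P :: "'a::euclidean_space set"
  assumes "polytope P" "G face_of P" "G \<noteq> P"
  obtains F where "is_facet F P" "G \<subseteq> F"
proof -
  define proper where "proper = {H. H face_of P \<and> H \<noteq> P}"
  have "finite proper"
    using finite_polytope_faces[OF assms(1)] by (simp add: proper_def)
  then obtain F where F: "F \<in> proper" "G \<subseteq> F" "\<forall>H\<in>proper. F \<subseteq> H \<longrightarrow> F = H"
    using finite_has_maximal2[of proper G] assms(2,3) by (auto simp: proper_def)
  then have "is_facet F P"
    unfolding is_facet_def proper_def by auto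
  with F(2) show thesis
    using that by blast
qed

lemma exists_facet_avoiding_edge:
  assumes "even CARD('v)" "pms_with UNIV e \<noteq> {}"
  obtains F where "is_facet F (pm_polytope :: (real ^ ('v::finite set)) set)"
    "char_vec ` (pms UNIV - pms_with UNIV e) \<subseteq> face_vertices F"
proof -
  let ?P = "pm_polytope :: (real ^ ('v set)) set" and ?V = "pm_vertices :: (real ^ ('v set)) set"
  have vertices: "?V = char_vec ` pms UNIV" "?V \<subseteq> ?P"
    using pm_vertices_eq[OF assms(1)] by (auto simp: pm_polytope_def hull_subset)
  have "?P \<subseteq> {z. inner (- axis e 1) z \<le> 0}"
    unfolding pm_polytope_def
  proof (rule hull_minimal)
    show "?V \<subseteq> {z. inner (- axis e 1) z \<le> 0}"
      unfolding vertices(1) by (auto simp: inner_axis' char_vec_nth)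
  qed (rule convex_halfspace_le)
  then have face: "?P \<inter> {z. inner (- axis e 1) z = 0} face_of ?P"
    by (intro face_of_Int_supporting_hyperplane_le) (auto simp: pm_polytope_def)
  obtain M where "M \<in> pms_with UNIV e"
    using assms(2) by blast
  then have "char_vec M \<in> ?P - {z. inner (- axis e 1) z = 0}"
    using vertices by (auto simp: pms_with_def inner_axis' char_vec_nth)
  then obtain F where F: "is_facet F ?P" "?P \<inter> {z. inner (- axis e 1) z = 0} \<subseteq> F"
    using face_subset_facet[OF polytope_pm_polytope face] by blast
  have "char_vec ` (pms UNIV - pms_with UNIV e) \<subseteq> face_vertices F"
  proof clarify
    fix M assume M: "M \<in> pms UNIV" "M \<notin> pms_with UNIV e"
    then have "char_vec M \<in> ?V"
      using vertices(1) by blast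
    moreover have "char_vec M \<in> ?P \<inter> {z. inner (- axis e 1) z = 0}"
      using M calculation vertices(2) by (auto simp: pms_with_def inner_axis' char_vec_nth)
    ultimately show "char_vec M \<in> face_vertices F"
      using F(2) by (auto simp: face_vertices_def)
  qed
  with F(1) show thesis
    by (rule that)
qed

lemma facet_vertices_max_weight:
  assumes "even CARD('v)" "is_facet F (pm_polytope :: (real ^ ('v::finite set)) set)"
  obtains w W where "\<And>M. M \<in> pms UNIV \<Longrightarrow> sum w M \<le> W"
    "face_vertices F = char_vec ` (pms UNIV - pms_below UNIV w W)" "pms_below UNIV w W \<noteq> {}"
proof -
  let ?P = "pm_polytope :: (real ^ ('v set)) set" and ?V = "pm_vertices :: (real ^ ('v set)) set"
  have vertices: "?V = char_vec ` pms UNIV" "?V \<subseteq> ?P"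
    using pm_vertices_eq[OF assms(1)] by (auto simp: pm_polytope_def hull_subset)
  have F: "F face_of ?P" "F \<noteq> ?P"
    using assms(2) by (auto simp: is_facet_def)
  moreover have "polyhedron ?P"
    using polytope_imp_polyhedron polytope_pm_polytope by blast
  ultimately have "F exposed_face_of ?P"
    using exposed_face_of_polyhedron by blast
  then obtain c W where cW: "?P \<subseteq> {z. inner c z \<le> W}" "F = ?P \<inter> {z. inner c z = W}"
    unfolding exposed_face_of_def by blast
  define w where "w e = c $ e" for e
  have weight: "inner c (char_vec M) = sum w M" for M
    unfolding w_def by (rule inner_char_vec)
  have upper: "sum w M \<le> W" if "M \<in> pms UNIV" for M
    using that cW(1) vertices weight by fastforce
  have in_F: "char_vec M \<in> F \<longleftrightarrow> sum w M = W" if "M \<in> pms UNIV" for M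
    using that cW(2) vertices weight by auto
  have "pms UNIV - pms_below UNIV w W = {M \<in> pms UNIV. sum w M = W}"
    using upper by (force simp: pms_below_def)
  then have "face_vertices F = char_vec ` (pms UNIV - pms_below UNIV w W)"
    using in_F by (auto simp: face_vertices_def vertices(1))
  moreover have "pms_below UNIV w W \<noteq> {}"
  proof
    assume "pms_below UNIV w W = {}"
    then have "?V \<subseteq> F"
      using in_F upper vertices(1) by (force simp: pms_below_def)
    then have "?P \<subseteq> F"
      unfolding pm_polytope_def using face_of_imp_convex[OF F(1)] by (rule hull_minimal)
    then show False
      using F face_of_imp_subset by blast
  qed
  ultimately show thesis
    using that upper by blast
qed

lemma finite_face_vertices: "finite (face_vertices (G :: (real ^ ('v::finite set)) set))"
  unfolding face_vertices_def pm_vertices_def by simp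

lemma card_char_vec_image_Diff:
  assumes "X \<subseteq> pms (UNIV :: 'v::finite set)"
  shows "card (char_vec ` (pms UNIV - X)) = card (pms (UNIV :: 'v set)) - card X"
proof -
  have "finite (pms (UNIV :: 'v set))"
    by (simp add: finite_pms)
  then have "card (pms UNIV - X) = card (pms (UNIV :: 'v set)) - card X"
    using assms by (intro card_Diff_subset) (auto intro: finite_subset)
  moreover have "card (char_vec ` (pms UNIV - X)) = card (pms UNIV - X)"
    by (intro card_image inj_on_subset[OF inj_char_vec]) simp
  ultimately show ?thesis
    by simp
qed

lemma two_distinct:
  assumes "2 \<le> CARD('a::finite)"
  shows "\<exists>x y :: 'a. x \<noteq> y"
  using assms card_le_Suc0_iff_eq[of "UNIV :: 'a set"] by auto

lemma even_CARD_eq_Suc: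
  assumes "even CARD('a::finite)"
  shows "\<exists>n. CARD('a) = 2 * Suc n"
proof -
  obtain k where k: "CARD('a) = 2 * k"
    using assms by (rule evenE)
  moreover have "k \<noteq> 0"
    using k by (metis mult_0_right zero_less_card_finite finite_UNIV less_irrefl)
  ultimately show ?thesis
    by (metis not0_implies_Suc)
qed

lemma card_missing_pms_le_of_largest_facet:
  fixes F :: "(real ^ ('v::finite set)) set"
  assumes "even CARD('v)" and card_V: "CARD('v) = 2 * Suc n"
    and largest: "\<And>G. is_facet G (pm_polytope :: (real ^ ('v set)) set) \<Longrightarrow>
              card (face_vertices G) \<le> card (face_vertices F)"
    and F: "face_vertices F = char_vec ` (pms UNIV - Z)" "Z \<subseteq> pms UNIV"
  shows "card Z \<le> pm_count n"
proof -
  have "2 \<le> CARD('v)"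
    using card_V by simp
  then obtain x y :: 'v where "x \<noteq> y"
    using two_distinct by blast
  then have card_e: "card (pms_with UNIV {x, y}) = pm_count n"
    by (rule card_pms_with_edge[OF finite_class.finite_UNIV card_V UNIV_I UNIV_I])
  then have "pms_with UNIV {x, y} \<noteq> {}"
    using pm_count_pos[of n] by auto
  then obtain G where G: "is_facet G (pm_polytope :: (real ^ ('v set)) set)"
    "char_vec ` (pms UNIV - pms_with UNIV {x, y}) \<subseteq> face_vertices G"
    using exists_facet_avoiding_edge[OF assms(1)] by blast
  have "card (char_vec ` (pms UNIV - pms_with UNIV {x, y})) \<le> card (face_vertices F)"
    using card_mono[OF finite_face_vertices G(2)] largest[OF G(1)] by simp
  moreover have "card (char_vec ` (pms UNIV - pms_with UNIV {x, y}))
      = pm_count (Suc n) - pm_count n"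
    using card_char_vec_image_Diff[of "pms_with UNIV {x, y}"] card_e
      card_pms[OF finite_class.finite_UNIV card_V]
    by (simp add: pms_with_def)
  moreover have "card (face_vertices F) = pm_count (Suc n) - card Z"
    using card_char_vec_image_Diff[OF F(2)] F(1) card_pms[OF finite_class.finite_UNIV card_V]
    by simp
  moreover have "card Z \<le> pm_count (Suc n)"
    using card_mono[OF finite_pms[OF finite_class.finite_UNIV] F(2)]
      card_pms[OF finite_class.finite_UNIV card_V]
    by simp
  ultimately show ?thesis
    by arith
qed

theorem lemma9p2:
  fixes F :: "(real ^ ('v::finite set)) set"
  assumes "even CARD('v)"
    and "is_facet F pm_polytope"
    and "\<And>G. is_facet G (pm_polytope :: (real ^ ('v set)) set) \<Longrightarrow>
              card (face_vertices G) \<le> card (face_vertices F)"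
  shows "\<exists>e \<in> (edges_K :: 'v set set).
           face_vertices F = char_vec ` {M. perfect_matching M \<and> e \<notin> M}"
proof -
  obtain n where card_V: "CARD('v) = 2 * Suc n"
    using even_CARD_eq_Suc[OF assms(1)] by blast
  obtain w W where wW: "\<And>M. M \<in> pms UNIV \<Longrightarrow> sum w M \<le> W"
    "face_vertices F = char_vec ` (pms UNIV - pms_below UNIV w W)" "pms_below UNIV w W \<noteq> {}"
    using facet_vertices_max_weight[OF assms(1,2)] by blast
  have "card (pms_below UNIV w W) \<le> pm_count n"
    using card_missing_pms_le_of_largest_facet[OF assms(1) card_V assms(3) wW(2)]
    by (simp add: pms_below_def)
  then obtain p q where pq: "p \<in> UNIV" "q \<in> UNIV" "p \<noteq> q"
    "pms_below UNIV w W = pms_with UNIV {p, q}"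
    using pms_below_eq_pms_with[OF finite_class.finite_UNIV card_V wW(1) wW(3)] by blast
  then have "face_vertices F = char_vec ` {M. perfect_matching M \<and> {p, q} \<notin> M}"
    using wW(2) perfect_matching_iff_on_UNIV[OF assms(1)] by (auto simp: pms_with_def pms_def)
  moreover have "{p, q} \<in> edges_K"
    using pq(3) by (simp add: edges_K_def)
  ultimately show ?thesis
    by blast
qed

end
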